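(* Let $d_0,d_1>0$ with $d_0+d_1=1$, and let $C_\alpha>0$, $C_\beta>0$. With $f_{j+i}=f(x_{j+i})$ on a uniform grid $x_{j+i}=x_j+i\Delta x$, define $\beta_0^*,\beta_1^*$ and $\tau_4$ by $$\beta_0^*=\tfrac14(3f_j-4f_{j-1}+f_{j-2})^2+C_\beta(f_{j-2}-2f_{j-1}+f_j)^2,\quad \beta_1^*=\tfrac14(3f_j-4f_{j+1}+f_{j+2})^2+C_\beta(f_j-2f_{j+1}+f_{j+2})^2,$$ $$\tau_4=\bigl|(f_{j+2}-3f_{j+1}+3f_j-f_{j-1})(2f_{j+1}-3f_j+f_{j-1})\bigr|,$$ and the nonlinear weights (with exponent $p=1$ and $\varepsilon=0$) $$\alpha_k=d_k\bigl(1+C_\alpha\,\tau_4/\beta_k^*\bigr),\qquad \omega_k=\frac{\alpha_k}{\alpha_0+\alpha_1},\quad k=0,1.$$ Assume $f$ is $C^6$ near the relevant points. Then $\omega_k-d_k=O(\Delta x^2)$ as $\Delta x\to0^+$ in each of the following situations: (1) $x_j=x^*$ is fixed and $f'(x^* )\ne0$; (2) $f'(x_c)=0$, $f''(x_c)\ne0$, $f'''(x_c)\ne0$ and, for a fixed $\lambda\in(-1,1)$, the grid is placed so that $x_c=x_j+\lambda\Delta x$.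
   Context: This is the weight construction of the WENO3-Z$_{ES4}$ scheme (which uses $C_\beta=2.0$, $C_\alpha=1.3$, $p=1$); $d_k$ are the linear weights of the third-order WENO reconstruction, $\beta_k^*$ the local smoothness indicators, $\tau_4$ the global smoothness indicator. The condition $\omega_k-d_k=O(\Delta x^2)$ is the standard sufficient condition for third-order accuracy of the WENO3 reconstruction. A point $x_c$ with $f'(x_c)=0$, $f''(x_c)\ne0$, $f'''(x_c)\ne0$ is a first-order critical point ($CP_1$). *)

theory Defs
  imports "HOL-Analysis.Analysis" "HOL-Library.Landau_Symbols"
begin

definition Cn_on :: "nat \<Rightarrow> (real \<Rightarrow> real) \<Rightarrow> real set \<Rightarrow> bool" where
  "Cn_on n f S \<longleftrightarrow> open S \<and>
     (\<forall>k<n. \<forall>x\<in>S. ((deriv ^^ k) f has_real_derivative (deriv ^^ Suc k) f x) (at x)) \<and>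
     continuous_on S ((deriv ^^ n) f)"

definition gv :: "(real \<Rightarrow> real) \<Rightarrow> real \<Rightarrow> real \<Rightarrow> int \<Rightarrow> real" where
  "gv f xj dx i = f (xj + real_of_int i * dx)"

definition beta0s :: "real \<Rightarrow> (real \<Rightarrow> real) \<Rightarrow> real \<Rightarrow> real \<Rightarrow> real" where
  "beta0s Cb f xj dx =
     (1/4) * (3 * gv f xj dx 0 - 4 * gv f xj dx (-1) + gv f xj dx (-2))^2
     + Cb * (gv f xj dx (-2) - 2 * gv f xj dx (-1) + gv f xj dx 0)^2"

definition beta1s :: "real \<Rightarrow> (real \<Rightarrow> real) \<Rightarrow> real \<Rightarrow> real \<Rightarrow> real" where
  "beta1s Cb f xj dx =
     (1/4) * (3 * gv f xj dx 0 - 4 * gv f xj dx 1 + gv f xj dx 2)^2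
     + Cb * (gv f xj dx 0 - 2 * gv f xj dx 1 + gv f xj dx 2)^2"

definition tau4 :: "(real \<Rightarrow> real) \<Rightarrow> real \<Rightarrow> real \<Rightarrow> real" where
  "tau4 f xj dx =
     \<bar>(gv f xj dx 2 - 3 * gv f xj dx 1 + 3 * gv f xj dx 0 - gv f xj dx (-1))
      * (2 * gv f xj dx 1 - 3 * gv f xj dx 0 + gv f xj dx (-1))\<bar>"

definition alpha0 :: "real \<Rightarrow> real \<Rightarrow> real \<Rightarrow> (real \<Rightarrow> real) \<Rightarrow> real \<Rightarrow> real \<Rightarrow> real" where
  "alpha0 d0 Ca Cb f xj dx = d0 * (1 + Ca * tau4 f xj dx / beta0s Cb f xj dx)"

definition alpha1 :: "real \<Rightarrow> real \<Rightarrow> real \<Rightarrow> (real \<Rightarrow> real) \<Rightarrow> real \<Rightarrow> real \<Rightarrow> real" where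
  "alpha1 d1 Ca Cb f xj dx = d1 * (1 + Ca * tau4 f xj dx / beta1s Cb f xj dx)"

definition omega0 :: "real \<Rightarrow> real \<Rightarrow> real \<Rightarrow> real \<Rightarrow> (real \<Rightarrow> real) \<Rightarrow> real \<Rightarrow> real \<Rightarrow> real" where
  "omega0 d0 d1 Ca Cb f xj dx =
     alpha0 d0 Ca Cb f xj dx / (alpha0 d0 Ca Cb f xj dx + alpha1 d1 Ca Cb f xj dx)"

definition omega1 :: "real \<Rightarrow> real \<Rightarrow> real \<Rightarrow> real \<Rightarrow> (real \<Rightarrow> real) \<Rightarrow> real \<Rightarrow> real \<Rightarrow> real" where
  "omega1 d0 d1 Ca Cb f xj dx =
     alpha1 d1 Ca Cb f xj dx / (alpha0 d0 Ca Cb f xj dx + alpha1 d1 Ca Cb f xj dx)"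

end

theory Submission
  imports Defs
begin

text \<open>
  As d0 + d1 = 1, the deviation of the nonlinear weight is
  omega0 - d0 = d0 d1 Ca tau4 (beta1 - beta0) / (beta0 beta1 (alpha0 + alpha1)) with
  alpha0 + alpha1 \<ge> 1, so omega_k - d_k = O(dx^2) as soon as beta0, beta1 \<ge> c dx^m and
  tau4 (beta1 - beta0) = O(dx^(2m+2)).  All these quantities are built from difference stencils,
  and Taylor expansion about x0 writes a stencil as the sum of its discrete moments times the
  derivatives of f at x0, up to O(dx^3).
  If f'(x0) \<noteq> 0, the one-sided slope terms give beta_k \<ge> f'(x0)^2 dx^2 / 4 (m = 2), while
  tau4 = O(dx^4) and beta1 - beta0 = O(dx^2).
  At a critical point the curvature terms give beta_k \<ge> Cb f''(x0)^2 dx^4 / 4 (m = 4);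
  there tau4 = O(dx^5) because f'(x0) = 0, and beta1 - beta0 = O(dx^5) because, written as a
  sum of differences of squares, each product pairs a factor O(dx^2) with a factor O(dx^3).
\<close>

lemma eventually_at_right_0_below:
  "(e::real) > 0 \<Longrightarrow> \<forall>\<^sub>F h in at_right 0. 0 < h \<and> h < e"
  by (auto simp: eventually_at_right_field intro!: exI[of _ e])

lemma power_in_bigo_power:
  "k \<le> n \<Longrightarrow> (\<lambda>h::real. h ^ n) \<in> O[at_right 0](\<lambda>h. h ^ k)"
  using eventually_at_right_0_below[of 1]
  by (intro bigoI[where c = 1]) (auto elim!: eventually_mono simp: power_decreasing)

lemma sum_monomials_in_bigo_power:
  assumes "finite A" and "\<And>j. j \<in> A \<Longrightarrow> j < k \<Longrightarrow> a j = 0"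
  shows "(\<lambda>h::real. \<Sum>j\<in>A. a j * h ^ j) \<in> O[at_right 0](\<lambda>h. h ^ k)"
proof (intro big_sum_in_bigo)
  fix j assume "j \<in> A"
  show "(\<lambda>h. a j * h ^ j) \<in> O[at_right 0](\<lambda>h. h ^ k)"
  proof (cases "j < k")
    case True
    then show ?thesis using assms(2) \<open>j \<in> A\<close> by simp
  next
    case False
    then show ?thesis by (simp add: cmult_in_bigo_iff power_in_bigo_power)
  qed
qed

lemma bigo_power_mult:
  assumes "f \<in> O[at_right 0](\<lambda>h::real. h ^ a)" and "g \<in> O[at_right 0](\<lambda>h::real. h ^ b)"
  shows "(\<lambda>h. f h * g h) \<in> O[at_right 0](\<lambda>h. h ^ (a + b))"
  using landau_o.big.mult[OF assms] by (simp add: power_add)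

lemma eventually_abs_ge_leading_term:
  assumes "(\<lambda>h. G h - q * h ^ n) \<in> O[at_right 0](\<lambda>h::real. h ^ (n + 1))" and "q \<noteq> 0"
  shows "\<forall>\<^sub>F h in at_right 0. \<bar>q\<bar> / 2 * h ^ n \<le> \<bar>G h\<bar>"
proof -
  obtain K where "K > 0"
    and K: "\<forall>\<^sub>F h in at_right 0. norm (G h - q * h ^ n) \<le> K * norm (h ^ (n + 1))"
    using assms(1) by (elim landau_o.bigE) blast
  have "\<forall>\<^sub>F h in at_right 0. 0 < h \<and> h < \<bar>q\<bar> / (2 * K)"
    using \<open>K > 0\<close> assms(2) by (intro eventually_at_right_0_below) auto
  with K show ?thesis
  proof eventually_elim
    case (elim h)
    have "K * h < \<bar>q\<bar> / 2" using elim \<open>K > 0\<close> by (simp add: field_simps)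
    then have "K * h * h ^ n \<le> \<bar>q\<bar> / 2 * h ^ n" using elim by (intro mult_right_mono) auto
    moreover have "\<bar>G h - q * h ^ n\<bar> \<le> K * h * h ^ n" using elim by (simp add: abs_mult mult_ac)
    moreover have "\<bar>q * h ^ n\<bar> = \<bar>q\<bar> * h ^ n" using elim by (simp add: abs_mult)
    ultimately show ?case by linarith
  qed
qed

section \<open>Taylor expansion\<close>

lemma Cn_on_mono:
  assumes "Cn_on n f U" and "m \<le> n"
  shows "Cn_on m f U"
proof -
  have D: "\<And>k x. k < n \<Longrightarrow> x \<in> U \<Longrightarrow>
      ((deriv ^^ k) f has_real_derivative (deriv ^^ Suc k) f x) (at x)"
    using assms(1) unfolding Cn_on_def by blast
  have "continuous_on U ((deriv ^^ m) f)"
  proof (cases "m = n")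
    case True
    then show ?thesis using assms(1) unfolding Cn_on_def by blast
  next
    case False
    then have "m < n" using assms(2) by simp
    then show ?thesis
      using D by (intro continuous_at_imp_continuous_on ballI DERIV_isCont) blast
  qed
  with assms show ?thesis unfolding Cn_on_def by auto
qed

lemma taylor_remainder_bound:
  assumes "Cn_on n f U" and "0 < n" and "x \<in> U"
  obtains \<delta> M where "\<delta> > 0" and "\<And>t. \<bar>t\<bar> < \<delta> \<Longrightarrow>
     \<bar>f (x + t) - (\<Sum>j<n. (deriv ^^ j) f x / fact j * t ^ j)\<bar> \<le> M * \<bar>t\<bar> ^ n"
proof -
  have "open U" and D: "\<And>k y. k < n \<Longrightarrow> y \<in> U \<Longrightarrow>
      ((deriv ^^ k) f has_real_derivative (deriv ^^ Suc k) f y) (at y)"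
    and cont: "continuous_on U ((deriv ^^ n) f)"
    using assms(1) unfolding Cn_on_def by auto
  then obtain e where "e > 0" and "ball x e \<subseteq> U"
    using assms(3) open_contains_ball by blast
  define \<delta> where "\<delta> = e / 2"
  have "\<delta> > 0" using \<open>e > 0\<close> by (simp add: \<delta>_def)
  have sub: "{x - \<delta>..x + \<delta>} \<subseteq> U"
    using \<open>e > 0\<close> \<open>ball x e \<subseteq> U\<close> by (auto simp: \<delta>_def dist_real_def subset_iff)
  obtain B where B: "\<And>y. y \<in> {x - \<delta>..x + \<delta>} \<Longrightarrow> norm ((deriv ^^ n) f y) \<le> B"
    using continuous_on_compact_bound[OF compact_Icc continuous_on_subset[OF cont sub]] by blast
  have "\<bar>f (x + t) - (\<Sum>j<n. (deriv ^^ j) f x / fact j * t ^ j)\<bar> \<le> B / fact n * \<bar>t\<bar> ^ n"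
    if t: "\<bar>t\<bar> < \<delta>" for t
  proof (cases "t = 0")
    case True
    with \<open>0 < n\<close> show ?thesis by (simp add: lessThan_nat_numeral zero_power)
  next
    case False
    have "\<forall>m s. m < n \<and> x - \<delta> \<le> s \<and> s \<le> x + \<delta> \<longrightarrow>
        ((deriv ^^ m) f has_real_derivative (deriv ^^ Suc m) f s) (at s)"
      using D sub by auto
    then have "\<exists>s. (if x + t < x then x + t < s \<and> s < x else x < s \<and> s < x + t) \<and>
        f (x + t) = (\<Sum>j<n. (deriv ^^ j) f x / fact j * (x + t - x) ^ j) +
                    (deriv ^^ n) f s / fact n * (x + t - x) ^ n"
      using False t by (intro Taylor[of n _ f "x - \<delta>" "x + \<delta>"]) (auto simp: \<open>0 < n\<close>)
    then obtain s
      where s_between: "if x + t < x then x + t < s \<and> s < x else x < s \<and> s < x + t"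
      and eq: "f (x + t) = (\<Sum>j<n. (deriv ^^ j) f x / fact j * t ^ j) +
                            (deriv ^^ n) f s / fact n * t ^ n"
      by auto
    have s: "s \<in> {x - \<delta>..x + \<delta>}"
      using s_between t by (auto split: if_splits)
    have "\<bar>(deriv ^^ n) f s / fact n * t ^ n\<bar> = \<bar>(deriv ^^ n) f s\<bar> / fact n * \<bar>t\<bar> ^ n"
      by (simp add: abs_mult power_abs)
    also have "\<dots> \<le> B / fact n * \<bar>t\<bar> ^ n"
      using B[OF s] by (intro mult_right_mono divide_right_mono) auto
    finally show ?thesis using eq by simp
  qed
  with \<open>\<delta> > 0\<close> show ?thesis using that by blast
qed

lemma taylor_remainder_bigo:
  assumes "Cn_on n f U" and "0 < n" and "x \<in> U"
  shows "(\<lambda>h. f (x + c * h) - (\<Sum>j<n. (deriv ^^ j) f x / fact j * (c * h) ^ j))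
           \<in> O[at_right 0](\<lambda>h. h ^ n)"
proof -
  obtain \<delta> M where "\<delta> > 0" and M: "\<And>t. \<bar>t\<bar> < \<delta> \<Longrightarrow>
     \<bar>f (x + t) - (\<Sum>j<n. (deriv ^^ j) f x / fact j * t ^ j)\<bar> \<le> M * \<bar>t\<bar> ^ n"
    using taylor_remainder_bound[OF assms] by blast
  have "\<forall>\<^sub>F h in at_right 0. 0 < h \<and> h < \<delta> / (\<bar>c\<bar> + 1)"
    using \<open>\<delta> > 0\<close> by (intro eventually_at_right_0_below) auto
  then show ?thesis
  proof (intro bigoI[where c = "M * \<bar>c\<bar> ^ n"], eventually_elim)
    case (elim h)
    have "\<bar>c\<bar> * h \<le> (\<bar>c\<bar> + 1) * h" using elim by (intro mult_right_mono) auto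
    also have "\<dots> < \<delta>" using elim by (simp add: field_simps)
    finally have "\<bar>c * h\<bar> < \<delta>" using elim by (simp add: abs_mult)
    from M[OF this] show ?case using elim by (simp add: abs_mult power_mult_distrib mult_ac)
  qed
qed

section \<open>Difference stencils\<close>

text \<open>A pair (c, i) stands for the term c f_(j+i).  Evaluating at x_j = x0 - l h puts the
  expansion point x0 at x_j + l h, the placement of x_c in the critical case.\<close>

definition stencil :: "(real \<times> int) list \<Rightarrow> (real \<Rightarrow> real) \<Rightarrow> real \<Rightarrow> real \<Rightarrow> real" where
  "stencil cs f x h = (\<Sum>(c, i)\<leftarrow>cs. c * gv f x h i)"

definition stencil_moment :: "(real \<times> int) list \<Rightarrow> real \<Rightarrow> nat \<Rightarrow> real" where
  "stencil_moment cs l j = (\<Sum>(c, i)\<leftarrow>cs. c * (of_int i - l) ^ j)"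

lemma stencil_taylor:
  assumes "Cn_on n f U" and "0 < n" and "x0 \<in> U"
  shows "(\<lambda>h. stencil cs f (x0 - l * h) h
            - (\<Sum>j<n. stencil_moment cs l j * (deriv ^^ j) f x0 / fact j * h ^ j))
           \<in> O[at_right 0](\<lambda>h. h ^ n)"
proof (induction cs)
  case Nil
  then show ?case by (simp add: stencil_def stencil_moment_def)
next
  case (Cons ci cs)
  obtain c i where ci: "ci = (c, i)" by fastforce
  define r where "r = of_int i - l"
  let ?R = "\<lambda>h. f (x0 + r * h) - (\<Sum>j<n. (deriv ^^ j) f x0 / fact j * (r * h) ^ j)"
  have "(\<lambda>h. c * ?R h) \<in> O[at_right 0](\<lambda>h. h ^ n)"
    using taylor_remainder_bigo[OF assms] by (simp add: cmult_in_bigo_iff)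
  moreover have "gv f (x0 - l * h) h i = f (x0 + r * h)" for h
    by (simp add: gv_def r_def algebra_simps)
  then have "stencil (ci # cs) f (x0 - l * h) h
        - (\<Sum>j<n. stencil_moment (ci # cs) l j * (deriv ^^ j) f x0 / fact j * h ^ j)
      = c * ?R h + (stencil cs f (x0 - l * h) h
        - (\<Sum>j<n. stencil_moment cs l j * (deriv ^^ j) f x0 / fact j * h ^ j))" for h
    by (simp add: ci stencil_def stencil_moment_def flip: r_def)
      (simp add: distrib_left distrib_right add_divide_distrib sum.distrib sum_distrib_left
        power_mult_distrib mult_ac right_diff_distrib)
  ultimately show ?case
    using sum_in_bigo(1)[OF _ Cons.IH] by presburger
qed

lemma stencil_bigo_power:
  assumes "Cn_on n f U" and "0 < n" and "x0 \<in> U" and "k \<le> n"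
    and "\<And>j. j < k \<Longrightarrow> stencil_moment cs l j * (deriv ^^ j) f x0 = 0"
  shows "(\<lambda>h. stencil cs f (x0 - l * h) h) \<in> O[at_right 0](\<lambda>h. h ^ k)"
proof -
  have "(\<lambda>h. \<Sum>j<n. stencil_moment cs l j * (deriv ^^ j) f x0 / fact j * h ^ j)
      \<in> O[at_right 0](\<lambda>h. h ^ k)"
    using assms(5) by (intro sum_monomials_in_bigo_power) auto
  moreover have "(\<lambda>h. stencil cs f (x0 - l * h) h
            - (\<Sum>j<n. stencil_moment cs l j * (deriv ^^ j) f x0 / fact j * h ^ j))
           \<in> O[at_right 0](\<lambda>h. h ^ k)"
    using stencil_taylor[OF assms(1-3)] power_in_bigo_power[OF assms(4)]
    by (rule landau_o.big.trans)
  ultimately show ?thesis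
    using sum_in_bigo(1) by fastforce
qed

lemma stencil_leading_term:
  assumes "Cn_on n f U" and "x0 \<in> U" and "k < n"
    and "\<And>j. j < k \<Longrightarrow> stencil_moment cs l j * (deriv ^^ j) f x0 = 0"
  shows "(\<lambda>h. stencil cs f (x0 - l * h) h
            - stencil_moment cs l k * (deriv ^^ k) f x0 / fact k * h ^ k)
           \<in> O[at_right 0](\<lambda>h. h ^ (k + 1))"
proof -
  define a where "a j = stencil_moment cs l j * (deriv ^^ j) f x0 / fact j" for j
  have split: "(\<Sum>j<n. a j * h ^ j) = a k * h ^ k + (\<Sum>j\<in>{..<n} - {k}. a j * h ^ j)" for h :: real
    using \<open>k < n\<close> by (simp add: sum.remove)
  have "(\<lambda>h. stencil cs f (x0 - l * h) h - (\<Sum>j<n. a j * h ^ j))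
           \<in> O[at_right 0](\<lambda>h. h ^ (k + 1))"
    using stencil_taylor[OF assms(1) _ assms(2)] power_in_bigo_power[of "k + 1" n] \<open>k < n\<close>
    unfolding a_def by (auto intro: landau_o.big.trans)
  moreover have "(\<lambda>h. \<Sum>j\<in>{..<n} - {k}. a j * h ^ j) \<in> O[at_right 0](\<lambda>h. h ^ (k + 1))"
    using assms(4) by (intro sum_monomials_in_bigo_power) (auto simp: a_def)
  ultimately have "(\<lambda>h. (stencil cs f (x0 - l * h) h - (\<Sum>j<n. a j * h ^ j))
                       + (\<Sum>j\<in>{..<n} - {k}. a j * h ^ j)) \<in> O[at_right 0](\<lambda>h. h ^ (k + 1))"
    by (rule sum_in_bigo(1))
  then show ?thesis
    unfolding split by (simp add: a_def)
qed

lemma stencil_append: "stencil (cs @ ds) f x h = stencil cs f x h + stencil ds f x h"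
  by (simp add: stencil_def)

lemma stencil_negate: "stencil (map (apfst uminus) cs) f x h = - stencil cs f x h"
  by (induction cs) (auto simp: stencil_def)

section \<open>The nonlinear weights\<close>

lemma weno_weight_deviation:
  fixes d0 d1 Ca b0 b1 t B :: real
  assumes d: "d0 > 0" "d1 > 0" "d0 + d1 = 1" and "Ca > 0" and "t \<ge> 0"
    and B: "0 < B" "B \<le> b0" "B \<le> b1"
  defines "a0 \<equiv> d0 * (1 + Ca * t / b0)" and "a1 \<equiv> d1 * (1 + Ca * t / b1)"
  shows "\<bar>a0 / (a0 + a1) - d0\<bar> \<le> Ca * \<bar>t * (b1 - b0)\<bar> / B\<^sup>2"
    and "a1 / (a0 + a1) - d1 = - (a0 / (a0 + a1) - d0)"
proof -
  have d1_eq: "d1 = 1 - d0" using d(3) by simp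
  have "b0 > 0" "b1 > 0" using B by linarith+
  then have "a0 \<ge> d0" "a1 \<ge> d1"
    using assms by (simp_all add: a0_def a1_def)
  then have sum_ge: "a0 + a1 \<ge> 1" using d by linarith
  have "a0 / (a0 + a1) - d0 = (a0 - d0 * (a0 + a1)) / (a0 + a1)"
    using sum_ge by (simp add: field_simps)
  also have "a0 - d0 * (a0 + a1) = d0 * d1 * (Ca * t * (b1 - b0) / (b0 * b1))"
    using \<open>b0 > 0\<close> \<open>b1 > 0\<close> by (simp add: a0_def a1_def field_simps d1_eq)
  finally have "\<bar>a0 / (a0 + a1) - d0\<bar> = d0 * d1 * (Ca * \<bar>t * (b1 - b0)\<bar> / (b0 * b1)) / (a0 + a1)"
    using d sum_ge \<open>Ca > 0\<close> \<open>b0 > 0\<close> \<open>b1 > 0\<close> by (simp add: abs_mult)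
  also have "\<dots> \<le> Ca * \<bar>t * (b1 - b0)\<bar> / (b0 * b1)"
  proof -
    have shrink: "d0 * d1 * Z / (a0 + a1) \<le> Z" if "Z \<ge> 0" for Z
    proof -
      have "d0 * d1 * Z \<le> 1 * Z" using d that by (intro mult_right_mono mult_le_one) auto
      also have "\<dots> \<le> Z * (a0 + a1)" using sum_ge that by (simp add: mult_le_cancel_left1)
      finally show ?thesis using sum_ge by (simp add: pos_divide_le_eq)
    qed
    show ?thesis by (rule shrink) (use \<open>Ca > 0\<close> \<open>b0 > 0\<close> \<open>b1 > 0\<close> in simp)
  qed
  also have "\<dots> \<le> Ca * \<bar>t * (b1 - b0)\<bar> / B\<^sup>2"
    using B \<open>Ca > 0\<close> by (intro divide_left_mono) (auto simp: power2_eq_square intro: mult_mono)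
  finally show "\<bar>a0 / (a0 + a1) - d0\<bar> \<le> Ca * \<bar>t * (b1 - b0)\<bar> / B\<^sup>2" .
  show "a1 / (a0 + a1) - d1 = - (a0 / (a0 + a1) - d0)"
    using sum_ge by (simp add: field_simps d1_eq)
qed

lemma omega_deviation_bigo:
  fixes X :: "real \<Rightarrow> real"
  assumes d: "d0 > 0" "d1 > 0" "d0 + d1 = 1" and "Ca > 0" and "c > 0"
    and beta_ge: "\<forall>\<^sub>F h in at_right 0.
                    c * h ^ m \<le> beta0s Cb f (X h) h \<and> c * h ^ m \<le> beta1s Cb f (X h) h"
    and tau_beta_diff: "(\<lambda>h. tau4 f (X h) h * (beta1s Cb f (X h) h - beta0s Cb f (X h) h))
              \<in> O[at_right 0](\<lambda>h. h ^ (2 * m + 2))"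
  shows "(\<lambda>h. omega0 d0 d1 Ca Cb f (X h) h - d0) \<in> O[at_right 0](\<lambda>h. h ^ 2)"
    and "(\<lambda>h. omega1 d0 d1 Ca Cb f (X h) h - d1) \<in> O[at_right 0](\<lambda>h. h ^ 2)"
proof -
  obtain K where K: "\<forall>\<^sub>F h in at_right 0. norm (tau4 f (X h) h *
      (beta1s Cb f (X h) h - beta0s Cb f (X h) h)) \<le> K * norm (h ^ (2 * m + 2))"
    using tau_beta_diff by (elim landau_o.bigE) blast
  have "\<forall>\<^sub>F h in at_right 0. 0 < h \<and> h < (1::real)"
    by (intro eventually_at_right_0_below) simp
  with beta_ge K have bound: "\<forall>\<^sub>F h in at_right 0.
      \<bar>omega0 d0 d1 Ca Cb f (X h) h - d0\<bar> \<le> Ca * K / c\<^sup>2 * h\<^sup>2 \<and>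
      omega1 d0 d1 Ca Cb f (X h) h - d1 = - (omega0 d0 d1 Ca Cb f (X h) h - d0)"
  proof eventually_elim
    case (elim h)
    have "c * h ^ m > 0" using elim \<open>c > 0\<close> by simp
    have tau_nonneg: "tau4 f (X h) h \<ge> 0" unfolding tau4_def by simp
    have betas_ge: "c * h ^ m \<le> beta0s Cb f (X h) h" "c * h ^ m \<le> beta1s Cb f (X h) h"
      using elim by auto
    note deviation = weno_weight_deviation[OF d \<open>Ca > 0\<close> tau_nonneg \<open>c * h ^ m > 0\<close> betas_ge,
        folded alpha0_def alpha1_def, folded omega0_def omega1_def]
    have "\<bar>omega0 d0 d1 Ca Cb f (X h) h - d0\<bar>
        \<le> Ca * \<bar>tau4 f (X h) h * (beta1s Cb f (X h) h - beta0s Cb f (X h) h)\<bar> / (c * h ^ m)\<^sup>2"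
      by (rule deviation(1))
    also have "\<dots> \<le> Ca * (K * h ^ (2 * m + 2)) / (c * h ^ m)\<^sup>2"
      using elim \<open>Ca > 0\<close> by (intro divide_right_mono mult_left_mono) auto
    also have "\<dots> = Ca * K / c\<^sup>2 * h\<^sup>2"
    proof -
      have "h ^ (2 * m + 2) = (h ^ m)\<^sup>2 * h\<^sup>2"
        by (simp add: power_add power_mult mult.commute power2_eq_square)
      then show ?thesis using \<open>c * h ^ m > 0\<close> by (simp add: field_simps power_mult_distrib)
    qed
    finally show ?case using deviation(2) elim by simp
  qed
  show "(\<lambda>h. omega0 d0 d1 Ca Cb f (X h) h - d0) \<in> O[at_right 0](\<lambda>h. h ^ 2)"
    using bound by (intro bigoI[where c = "Ca * K / c\<^sup>2"]) (auto elim!: eventually_mono)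
  show "(\<lambda>h. omega1 d0 d1 Ca Cb f (X h) h - d1) \<in> O[at_right 0](\<lambda>h. h ^ 2)"
    using bound by (intro bigoI[where c = "Ca * K / c\<^sup>2"]) (auto elim!: eventually_mono)
qed

section \<open>The smoothness indicators\<close>

definition slope0_stencil :: "(real \<times> int) list" where
  "slope0_stencil = [(3, 0), (-4, -1), (1, -2)]"

definition slope1_stencil :: "(real \<times> int) list" where
  "slope1_stencil = [(3, 0), (-4, 1), (1, 2)]"

definition curv0_stencil :: "(real \<times> int) list" where
  "curv0_stencil = [(1, -2), (-2, -1), (1, 0)]"

definition curv1_stencil :: "(real \<times> int) list" where
  "curv1_stencil = [(1, 0), (-2, 1), (1, 2)]"

definition diff3_stencil :: "(real \<times> int) list" where
  "diff3_stencil = [(1, 2), (-3, 1), (3, 0), (-1, -1)]"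

definition tau_slope_stencil :: "(real \<times> int) list" where
  "tau_slope_stencil = [(2, 1), (-3, 0), (1, -1)]"

lemmas weno_stencil_defs = slope0_stencil_def slope1_stencil_def curv0_stencil_def
  curv1_stencil_def diff3_stencil_def tau_slope_stencil_def

lemma beta0s_stencil:
  "beta0s Cb f x h = (stencil slope0_stencil f x h)\<^sup>2 / 4 + Cb * (stencil curv0_stencil f x h)\<^sup>2"
  by (simp add: beta0s_def stencil_def weno_stencil_defs algebra_simps)

lemma beta1s_stencil:
  "beta1s Cb f x h = (stencil slope1_stencil f x h)\<^sup>2 / 4 + Cb * (stencil curv1_stencil f x h)\<^sup>2"
  by (simp add: beta1s_def stencil_def weno_stencil_defs algebra_simps)

lemma tau4_stencil:
  "tau4 f x h = \<bar>stencil diff3_stencil f x h * stencil tau_slope_stencil f x h\<bar>"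
  by (simp add: tau4_def stencil_def weno_stencil_defs algebra_simps)

lemmas stencil_moment_simps =
  stencil_moment_def weno_stencil_defs algebra_simps less_Suc_eq numeral_eq_Suc

lemma tau4_bigo:
  assumes C: "Cn_on 3 f U" and x0: "x0 \<in> U"
  shows "(\<lambda>h. tau4 f (x0 - l * h) h) \<in> O[at_right 0](\<lambda>h. h ^ 4)"
proof -
  have "(\<lambda>h. stencil diff3_stencil f (x0 - l * h) h) \<in> O[at_right 0](\<lambda>h. h ^ 3)"
    by (rule stencil_bigo_power[OF C _ x0]) (auto simp: stencil_moment_simps)
  moreover have "(\<lambda>h. stencil tau_slope_stencil f (x0 - l * h) h) \<in> O[at_right 0](\<lambda>h. h ^ 1)"
    by (rule stencil_bigo_power[OF C _ x0]) (auto simp: stencil_moment_simps)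
  ultimately have "(\<lambda>h. stencil diff3_stencil f (x0 - l * h) h *
      stencil tau_slope_stencil f (x0 - l * h) h) \<in> O[at_right 0](\<lambda>h. h ^ (3 + 1))"
    by (rule bigo_power_mult)
  then show ?thesis
    unfolding tau4_stencil by simp
qed

lemma tau4_bigo_critical:
  assumes C: "Cn_on 3 f U" and x0: "x0 \<in> U" and "deriv f x0 = 0"
  shows "(\<lambda>h. tau4 f (x0 - l * h) h) \<in> O[at_right 0](\<lambda>h. h ^ 5)"
proof -
  have "(\<lambda>h. stencil diff3_stencil f (x0 - l * h) h) \<in> O[at_right 0](\<lambda>h. h ^ 3)"
    by (rule stencil_bigo_power[OF C _ x0]) (auto simp: stencil_moment_simps)
  moreover have "(\<lambda>h. stencil tau_slope_stencil f (x0 - l * h) h) \<in> O[at_right 0](\<lambda>h. h ^ 2)"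
    by (rule stencil_bigo_power[OF C _ x0]) (auto simp: stencil_moment_simps \<open>deriv f x0 = 0\<close>)
  ultimately have "(\<lambda>h. stencil diff3_stencil f (x0 - l * h) h *
      stencil tau_slope_stencil f (x0 - l * h) h) \<in> O[at_right 0](\<lambda>h. h ^ (3 + 2))"
    by (rule bigo_power_mult)
  then show ?thesis
    unfolding tau4_stencil by simp
qed

lemma beta_diff_bigo:
  assumes C: "Cn_on 3 f U" and x0: "x0 \<in> U"
  shows "(\<lambda>h. beta1s Cb f (x0 - l * h) h - beta0s Cb f (x0 - l * h) h) \<in> O[at_right 0](\<lambda>h. h ^ 2)"
proof -
  have square: "(\<lambda>h. (stencil cs f (x0 - l * h) h)\<^sup>2) \<in> O[at_right 0](\<lambda>h. h\<^sup>2)"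
    if "stencil_moment cs l 0 = 0" for cs
  proof -
    have "(\<lambda>h. stencil cs f (x0 - l * h) h) \<in> O[at_right 0](\<lambda>h. h ^ 1)"
      using that by (intro stencil_bigo_power[OF C _ x0]) auto
    from bigo_power_mult[OF this this] show ?thesis by (simp add: power2_eq_square)
  qed
  have "(\<lambda>h. (stencil cs f (x0 - l * h) h)\<^sup>2 / 4 + Cb * (stencil ds f (x0 - l * h) h)\<^sup>2)
      \<in> O[at_right 0](\<lambda>h. h ^ 2)"
    if "stencil_moment cs l 0 = 0" "stencil_moment ds l 0 = 0" for cs ds
    using square[OF that(1)] square[OF that(2)]
    by (intro sum_in_bigo(1)) (simp_all add: landau_o.big.cdiv_in_iff' cmult_in_bigo_iff)
  from sum_in_bigo(2)[OF this this] show ?thesis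
    unfolding beta0s_stencil beta1s_stencil by (simp add: stencil_moment_simps)
qed

lemma beta_diff_bigo_critical:
  assumes C: "Cn_on 3 f U" and x0: "x0 \<in> U" and "deriv f x0 = 0"
  shows "(\<lambda>h. beta1s Cb f (x0 - l * h) h - beta0s Cb f (x0 - l * h) h) \<in> O[at_right 0](\<lambda>h. h ^ 5)"
proof -
  let ?s = "\<lambda>cs h. stencil cs f (x0 - l * h) h"
  txt \<open>The sum of the slope stencils and the difference of the curvature stencils annihilate
    quadratics, so they are O(h^3); the other two factors are O(h^2), the difference of the
    slope stencils only because f'(x0) = 0.\<close>
  let ?slope_diff = "?s (slope1_stencil @ map (apfst uminus) slope0_stencil)"
  let ?slope_sum = "?s (slope1_stencil @ slope0_stencil)"
  let ?curv_sum = "?s (curv1_stencil @ curv0_stencil)"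
  let ?curv_diff = "?s (curv1_stencil @ map (apfst uminus) curv0_stencil)"
  have "beta1s Cb f (x0 - l * h) h - beta0s Cb f (x0 - l * h) h =
      ?slope_diff h * ?slope_sum h / 4 + Cb * (?curv_sum h * ?curv_diff h)" for h
    by (simp add: beta0s_stencil beta1s_stencil stencil_append stencil_negate field_simps
        power2_eq_square)
  moreover have "(\<lambda>h. ?slope_diff h * ?slope_sum h) \<in> O[at_right 0](\<lambda>h. h ^ (2 + 3))"
    "(\<lambda>h. ?curv_sum h * ?curv_diff h) \<in> O[at_right 0](\<lambda>h. h ^ (2 + 3))"
    by (intro bigo_power_mult stencil_bigo_power[OF C _ x0];
        auto simp: stencil_moment_simps \<open>deriv f x0 = 0\<close>)+
  ultimately show ?thesis
    by (simp add: sum_in_bigo landau_o.big.cdiv_in_iff' cmult_in_bigo_iff)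
qed

lemma betas_ge_noncritical:
  assumes C: "Cn_on 3 f U" and x0: "x0 \<in> U" and "deriv f x0 \<noteq> 0" and "Cb \<ge> 0"
  shows "\<forall>\<^sub>F h in at_right 0.
      (deriv f x0)\<^sup>2 / 4 * h ^ 2 \<le> beta0s Cb f (x0 - l * h) h \<and>
      (deriv f x0)\<^sup>2 / 4 * h ^ 2 \<le> beta1s Cb f (x0 - l * h) h"
proof -
  have slope_ge: "\<forall>\<^sub>F h in at_right 0. \<bar>deriv f x0\<bar> * h \<le> \<bar>stencil cs f (x0 - l * h) h\<bar>"
    if "stencil_moment cs l 0 = 0" and "\<bar>stencil_moment cs l 1\<bar> = 2" for cs
  proof -
    have "(\<lambda>h. stencil cs f (x0 - l * h) h - stencil_moment cs l 1 * deriv f x0 * h ^ 1)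
        \<in> O[at_right 0](\<lambda>h. h ^ (1 + 1))"
      using stencil_leading_term[OF C x0, of 1 cs l] that(1) by simp
    from eventually_abs_ge_leading_term[OF this] show ?thesis
      using that(2) \<open>deriv f x0 \<noteq> 0\<close> by (auto simp: abs_mult)
  qed
  have "\<forall>\<^sub>F h in at_right 0. \<bar>deriv f x0\<bar> * h \<le> \<bar>stencil slope0_stencil f (x0 - l * h) h\<bar>"
    "\<forall>\<^sub>F h in at_right 0. \<bar>deriv f x0\<bar> * h \<le> \<bar>stencil slope1_stencil f (x0 - l * h) h\<bar>"
    by (rule slope_ge; simp add: stencil_moment_simps)+
  moreover have "\<forall>\<^sub>F h in at_right 0. 0 < h \<and> h < (1::real)"
    by (intro eventually_at_right_0_below) simp
  ultimately show ?thesis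
  proof eventually_elim
    case (elim h)
    then have "(\<bar>deriv f x0\<bar> * h)\<^sup>2 \<le> (stencil slope0_stencil f (x0 - l * h) h)\<^sup>2"
      "(\<bar>deriv f x0\<bar> * h)\<^sup>2 \<le> (stencil slope1_stencil f (x0 - l * h) h)\<^sup>2"
      by (auto intro!: power_mono simp flip: abs_le_square_iff)
    then show ?case
      using \<open>Cb \<ge> 0\<close> by (simp add: beta0s_stencil beta1s_stencil power_mult_distrib add_increasing2)
  qed
qed

lemma betas_ge_critical:
  assumes C: "Cn_on 3 f U" and x0: "x0 \<in> U" and "(deriv ^^ 2) f x0 \<noteq> 0" and "Cb \<ge> 0"
  shows "\<forall>\<^sub>F h in at_right 0.
      Cb * ((deriv ^^ 2) f x0)\<^sup>2 / 4 * h ^ 4 \<le> beta0s Cb f (x0 - l * h) h \<and>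
      Cb * ((deriv ^^ 2) f x0)\<^sup>2 / 4 * h ^ 4 \<le> beta1s Cb f (x0 - l * h) h"
proof -
  let ?f2 = "(deriv ^^ 2) f x0"
  have curv_ge: "\<forall>\<^sub>F h in at_right 0. \<bar>?f2\<bar> / 2 * h ^ 2 \<le> \<bar>stencil cs f (x0 - l * h) h\<bar>"
    if "stencil_moment cs l 0 = 0" "stencil_moment cs l 1 = 0" "stencil_moment cs l 2 = 2" for cs
  proof -
    have "(\<lambda>h. stencil cs f (x0 - l * h) h - stencil_moment cs l 2 * ?f2 / fact 2 * h ^ 2)
        \<in> O[at_right 0](\<lambda>h. h ^ (2 + 1))"
      using that by (intro stencil_leading_term[OF C x0]) (auto simp: less_Suc_eq numeral_eq_Suc)
    then have "(\<lambda>h. stencil cs f (x0 - l * h) h - ?f2 * h ^ 2) \<in> O[at_right 0](\<lambda>h. h ^ (2 + 1))"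
      using that(3) by simp
    from eventually_abs_ge_leading_term[OF this \<open>?f2 \<noteq> 0\<close>] show ?thesis .
  qed
  have "\<forall>\<^sub>F h in at_right 0. \<bar>?f2\<bar> / 2 * h ^ 2 \<le> \<bar>stencil curv0_stencil f (x0 - l * h) h\<bar>"
    "\<forall>\<^sub>F h in at_right 0. \<bar>?f2\<bar> / 2 * h ^ 2 \<le> \<bar>stencil curv1_stencil f (x0 - l * h) h\<bar>"
    by (rule curv_ge; simp add: stencil_moment_simps power2_eq_square)+
  then show ?thesis
  proof eventually_elim
    case (elim h)
    then have "(\<bar>?f2\<bar> / 2 * h ^ 2)\<^sup>2 \<le> (stencil curv0_stencil f (x0 - l * h) h)\<^sup>2"
        "(\<bar>?f2\<bar> / 2 * h ^ 2)\<^sup>2 \<le> (stencil curv1_stencil f (x0 - l * h) h)\<^sup>2"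
      by (auto intro!: power_mono simp flip: abs_le_square_iff)
    then have "?f2\<^sup>2 / 4 * h ^ 4 \<le> (stencil curv0_stencil f (x0 - l * h) h)\<^sup>2"
        "?f2\<^sup>2 / 4 * h ^ 4 \<le> (stencil curv1_stencil f (x0 - l * h) h)\<^sup>2"
      by (simp_all add: power_mult_distrib power_divide flip: power_mult)
    from this[THEN mult_left_mono, OF \<open>Cb \<ge> 0\<close>] show ?case
      by (simp add: beta0s_stencil beta1s_stencil add_increasing mult.assoc)
  qed
qed

lemma weno_weights_noncritical:
  assumes C: "Cn_on 3 f U" and x0: "x0 \<in> U" and "deriv f x0 \<noteq> 0"
    and d: "d0 > 0" "d1 > 0" "d0 + d1 = 1" and "Ca > 0" and "Cb \<ge> 0"
  shows "(\<lambda>h. omega0 d0 d1 Ca Cb f (x0 - l * h) h - d0) \<in> O[at_right 0](\<lambda>h. h ^ 2)"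
    and "(\<lambda>h. omega1 d0 d1 Ca Cb f (x0 - l * h) h - d1) \<in> O[at_right 0](\<lambda>h. h ^ 2)"
proof -
  have "(deriv f x0)\<^sup>2 / 4 > 0" using \<open>deriv f x0 \<noteq> 0\<close> by simp
  moreover note betas_ge_noncritical[OF C x0 \<open>deriv f x0 \<noteq> 0\<close> \<open>Cb \<ge> 0\<close>]
  moreover have "(\<lambda>h. tau4 f (x0 - l * h) h *
      (beta1s Cb f (x0 - l * h) h - beta0s Cb f (x0 - l * h) h))
        \<in> O[at_right 0](\<lambda>h. h ^ (2 * 2 + 2))"
    using bigo_power_mult[OF tau4_bigo[OF C x0] beta_diff_bigo[OF C x0]] by simp
  ultimately show "(\<lambda>h. omega0 d0 d1 Ca Cb f (x0 - l * h) h - d0) \<in> O[at_right 0](\<lambda>h. h ^ 2)"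
    and "(\<lambda>h. omega1 d0 d1 Ca Cb f (x0 - l * h) h - d1) \<in> O[at_right 0](\<lambda>h. h ^ 2)"
    by (rule omega_deviation_bigo[OF d \<open>Ca > 0\<close>])+
qed

lemma weno_weights_critical:
  assumes C: "Cn_on 3 f U" and x0: "x0 \<in> U" and "deriv f x0 = 0" and "(deriv ^^ 2) f x0 \<noteq> 0"
    and d: "d0 > 0" "d1 > 0" "d0 + d1 = 1" and "Ca > 0" and "Cb > 0"
  shows "(\<lambda>h. omega0 d0 d1 Ca Cb f (x0 - l * h) h - d0) \<in> O[at_right 0](\<lambda>h. h ^ 2)"
    and "(\<lambda>h. omega1 d0 d1 Ca Cb f (x0 - l * h) h - d1) \<in> O[at_right 0](\<lambda>h. h ^ 2)"
proof -
  have "Cb * ((deriv ^^ 2) f x0)\<^sup>2 / 4 > 0" using \<open>(deriv ^^ 2) f x0 \<noteq> 0\<close> \<open>Cb > 0\<close> by simp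
  moreover note betas_ge_critical[OF C x0 \<open>(deriv ^^ 2) f x0 \<noteq> 0\<close> less_imp_le[OF \<open>Cb > 0\<close>]]
  moreover have "(\<lambda>h. tau4 f (x0 - l * h) h *
      (beta1s Cb f (x0 - l * h) h - beta0s Cb f (x0 - l * h) h))
        \<in> O[at_right 0](\<lambda>h. h ^ (2 * 4 + 2))"
    using bigo_power_mult[OF tau4_bigo_critical beta_diff_bigo_critical] assms(1-3) by simp
  ultimately show "(\<lambda>h. omega0 d0 d1 Ca Cb f (x0 - l * h) h - d0) \<in> O[at_right 0](\<lambda>h. h ^ 2)"
    and "(\<lambda>h. omega1 d0 d1 Ca Cb f (x0 - l * h) h - d1) \<in> O[at_right 0](\<lambda>h. h ^ 2)"
    by (rule omega_deviation_bigo[OF d \<open>Ca > 0\<close>])+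
qed

theorem mainTheorem5:
  fixes d0 d1 Ca Cb :: real
  assumes "d0 > 0" and "d1 > 0" and "d0 + d1 = 1" and "Ca > 0" and "Cb > 0"
  shows
    "(\<forall>(f :: real \<Rightarrow> real) (xs :: real) U.
        xs \<in> U \<and> Cn_on 6 f U \<and> deriv f xs \<noteq> 0 \<longrightarrow>
          (\<lambda>dx. omega0 d0 d1 Ca Cb f xs dx - d0) \<in> O[at_right 0](\<lambda>dx. dx ^ 2) \<and>
          (\<lambda>dx. omega1 d0 d1 Ca Cb f xs dx - d1) \<in> O[at_right 0](\<lambda>dx. dx ^ 2))
   \<and> (\<forall>(f :: real \<Rightarrow> real) (xc :: real) (lam :: real) U.
        xc \<in> U \<and> Cn_on 6 f U \<and> deriv f xc = 0 \<and>
        (deriv ^^ 2) f xc \<noteq> 0 \<and> (deriv ^^ 3) f xc \<noteq> 0 \<and> -1 < lam \<and> lam < 1 \<longrightarrow>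
          (\<lambda>dx. omega0 d0 d1 Ca Cb f (xc - lam * dx) dx - d0) \<in> O[at_right 0](\<lambda>dx. dx ^ 2) \<and>
          (\<lambda>dx. omega1 d0 d1 Ca Cb f (xc - lam * dx) dx - d1) \<in> O[at_right 0](\<lambda>dx. dx ^ 2))"
proof (intro conjI allI impI; elim conjE)
  fix f xs U
  assume "xs \<in> U" and "Cn_on 6 f U" and "deriv f xs \<noteq> 0"
  then have "Cn_on 3 f U" using Cn_on_mono by simp
  from weno_weights_noncritical[OF this \<open>xs \<in> U\<close> \<open>deriv f xs \<noteq> 0\<close> assms(1-4)
      less_imp_le[OF assms(5)], of 0]
  show "(\<lambda>dx. omega0 d0 d1 Ca Cb f xs dx - d0) \<in> O[at_right 0](\<lambda>dx. dx ^ 2)"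
    and "(\<lambda>dx. omega1 d0 d1 Ca Cb f xs dx - d1) \<in> O[at_right 0](\<lambda>dx. dx ^ 2)"
    by simp_all
next
  fix f xc lam U
  assume "xc \<in> U" and "Cn_on 6 f U" and "deriv f xc = 0" and "(deriv ^^ 2) f xc \<noteq> 0"
  then have "Cn_on 3 f U" using Cn_on_mono by simp
  from weno_weights_critical[OF this \<open>xc \<in> U\<close> \<open>deriv f xc = 0\<close> \<open>(deriv ^^ 2) f xc \<noteq> 0\<close> assms]
  show "(\<lambda>dx. omega0 d0 d1 Ca Cb f (xc - lam * dx) dx - d0) \<in> O[at_right 0](\<lambda>dx. dx ^ 2)"
    and "(\<lambda>dx. omega1 d0 d1 Ca Cb f (xc - lam * dx) dx - d1) \<in> O[at_right 0](\<lambda>dx. dx ^ 2)" .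
qed

end
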